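(* Let $q\in(0,1)$ and let $\alpha,p,j\ge0$ be integers. Then $$\sum_{M\in M^{(\alpha)}_{p,j}(p)}q^{\mathrm{cr}(M)}=[p]_q!\sum_{i=0}^{p}q^{(p-i)(\alpha-i)+pj}\begin{bmatrix} p\\ i\end{bmatrix}_q\begin{bmatrix} \alpha+j\\ i\end{bmatrix}_q\begin{bmatrix} p-i+j\\ j\end{bmatrix}_q.$$
   Context: $[n]_q=\frac{1-q^n}{1-q}$, $[n]_q!=\prod_{m=1}^n[m]_q$, $\begin{bmatrix} n\\ m\end{bmatrix}_q=\frac{[n]_q!}{[m]_q![n-m]_q!}$ ($=0$ if $m>n$). Bipartite matchings: for integers $n,j,\alpha\ge0$, let $T_-=\{-\alpha-j,\dots,-1\}$, $T_+=\{1,\dots,n\}$ (top row), $B_-=\{-\tilde j,\dots,-\tilde 1\}$, $B_+=\{\tilde1,\dots,\tilde n\}$ (bottom row; $\tilde m$ is a formal copy of the integer $m$, bottom vertices compared via these integers). A bipartite matching is a set partition of $T_-\cup T_+\cup B_-\cup B_+$ into singletons (isolated vertices) and blocks $\{a,\tilde b\}$ with $a$ top, $\tilde b$ bottom (edges, written $(a,\tilde b)$). $M^{(\alpha)}_{n,j}$ is the set of such matchings with no edge between $T_-$ and $B_-$; $M^{(\alpha)}_{n,j}(l)$ its subset with exactly $l$ edges. The crossing number $\mathrm{cr}(M)$ is the total number of: (C1) unordered pairs of edges $(a,\tilde b),(c,\tilde d)$ with $a<c$ and $d<b$; (C2) pairs of an edge $(a,\tilde b)$ and an isolated top vertex $c$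 with $c<a$; (C3) pairs of an edge $(a,\tilde b)$ and an isolated bottom vertex $\tilde d$ with $d<b$. *)

theory Defs
  imports Complex_Main
begin

definition qint :: "real \<Rightarrow> nat \<Rightarrow> real" where
  "qint q n = (1 - q ^ n) / (1 - q)"

definition qfact :: "real \<Rightarrow> nat \<Rightarrow> real" where
  "qfact q n = (\<Prod>m = 1..n. qint q m)"

definition qbinom :: "real \<Rightarrow> nat \<Rightarrow> nat \<Rightarrow> real" where
  "qbinom q n m = (if m > n then 0 else qfact q n / (qfact q m * qfact q (n - m)))"

(* Vertices are encoded by integers: top row T_- \<union> T_+, bottom row B_- \<union> B_+
   (the bottom copy ~m is represented by the integer m in the second component). *)
definition top_vs :: "nat \<Rightarrow> nat \<Rightarrow> nat \<Rightarrow> int set" where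
  "top_vs \<alpha> n j = {-(int \<alpha> + int j)..-1} \<union> {1..int n}"

definition bot_vs :: "nat \<Rightarrow> nat \<Rightarrow> int set" where
  "bot_vs n j = {-(int j)..-1} \<union> {1..int n}"

(* A bipartite matching is given by its set of edges (a, b) (a top, ~b bottom);
   all other vertices are isolated. No edge between T_- and B_-. *)
definition matchings :: "nat \<Rightarrow> nat \<Rightarrow> nat \<Rightarrow> (int \<times> int) set set" where
  "matchings \<alpha> n j = {E. E \<subseteq> top_vs \<alpha> n j \<times> bot_vs n j
      \<and> (\<forall>(a,b)\<in>E. \<not> (a < 0 \<and> b < 0))
      \<and> (\<forall>e1\<in>E. \<forall>e2\<in>E. fst e1 = fst e2 \<longrightarrow> e1 = e2)
      \<and> (\<forall>e1\<in>E. \<forall>e2\<in>E. snd e1 = snd e2 \<longrightarrow> e1 = e2)}"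

definition matchings_l :: "nat \<Rightarrow> nat \<Rightarrow> nat \<Rightarrow> nat \<Rightarrow> (int \<times> int) set set" where
  "matchings_l \<alpha> n j l = {E \<in> matchings \<alpha> n j. card E = l}"

(* crossing number: (C1) pairs of crossing edges (each unordered pair counted once
   via the ordering a < c), (C2) edge / isolated top vertex to its left,
   (C3) edge / isolated bottom vertex to its left *)
definition cr :: "nat \<Rightarrow> nat \<Rightarrow> nat \<Rightarrow> (int \<times> int) set \<Rightarrow> nat" where
  "cr \<alpha> n j E =
     card {(e1, e2). e1 \<in> E \<and> e2 \<in> E \<and> fst e1 < fst e2 \<and> snd e2 < snd e1}
   + card {(e, c). e \<in> E \<and> c \<in> top_vs \<alpha> n j - fst ` E \<and> c < fst e}
   + card {(e, d). e \<in> E \<and> d \<in> bot_vs n j - snd ` E \<and> d < snd e}"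

end

theory Submission
  imports Defs
begin

(* Removing the leftmost top vertex x gives a recursion for the weighted count of l-edge
   matchings between arbitrary finite sets T, B of integers. If x is isolated, it lies to the
   left of every edge and contributes q^l through (C2); if x is joined to b, the new edge crosses
   exactly the edges and isolated bottom vertices to the left of b, contributing q^(rank of b
   in B), and these powers sum to the q-integer [|B|]_q. When all top vertices are nonnegative
   the recursion is Pascal's rule for the q-rook numbers [l]_q! [P,l]_q [N,l]_q; when A negative
   top vertices may not meet the J negative bottom vertices it is solved by summing over the
   number i of edges at the negative top vertices. Taking A = alpha + j and P = K = l = p gives
   the formula. *)

lemma qint_0 [simp]: "qint q 0 = 0"
  by (simp add: qint_def)

lemma qfact_0 [simp]: "qfact q 0 = 1"
  by (simp add: qfact_def)

lemma qint_Suc: "q \<noteq> 1 \<Longrightarrow> qint q (Suc n) = qint q n + q ^ n"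
  unfolding qint_def by (simp add: field_simps)

lemma qfact_Suc: "qfact q (Suc n) = qfact q n * qint q (Suc n)"
  unfolding qfact_def by (simp add: prod.nat_ivl_Suc' mult.commute)

lemma qbinom_symmetric:
  assumes "k \<le> n"
  shows "qbinom q n (n - k) = qbinom q n k"
proof -
  have "\<not> n < n - k" and "n - (n - k) = k" using assms by auto
  then show ?thesis unfolding qbinom_def using assms by (simp add: mult.commute)
qed

definition qfalling :: "real \<Rightarrow> nat \<Rightarrow> nat \<Rightarrow> real" where
  "qfalling q K i = (\<Prod>m<i. qint q (K - m))"

lemma qfalling_Suc: "qfalling q K (Suc i) = qint q K * qfalling q (K - 1) i"
  unfolding qfalling_def prod.lessThan_Suc_shift by (simp add: diff_diff_add)

lemma qfalling_mult_qfact: "i \<le> K \<Longrightarrow> qfalling q K i * qfact q (K - i) = qfact q K"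
proof (induction i arbitrary: K)
  case 0
  then show ?case by (simp add: qfalling_def)
next
  case (Suc i)
  then obtain K' where K: "K = Suc K'" by (cases K) auto
  with Suc show ?case by (simp add: qfalling_Suc qfact_Suc)
qed

definition qrook :: "real \<Rightarrow> nat \<Rightarrow> nat \<Rightarrow> nat \<Rightarrow> real" where
  "qrook q P N l = qfact q l * qbinom q P l * qbinom q N l"

lemma qrook_0_Suc: "qrook q 0 N (Suc l) = 0"
  by (simp add: qrook_def qbinom_def)

(* qrook_corner q A P J K l is the q-count of l-edge matchings between A + P top and J + K bottom
   vertices in which none of the first A top vertices is joined to one of the first J bottom
   vertices. Its term i counts those where i of the A top vertices are matched, injectively into
   the K admissible bottom vertices (qfalling), and the remaining l - i edges join the P other
   top vertices to the J + K - i free bottom ones. *)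
definition qrook_corner_term :: "real \<Rightarrow> nat \<Rightarrow> nat \<Rightarrow> nat \<Rightarrow> nat \<Rightarrow> nat \<Rightarrow> nat \<Rightarrow> real" where
  "qrook_corner_term q A P J K l i = q ^ ((A - i) * (l - i)) * qbinom q A i * q ^ (J * i)
      * qfalling q K i * qrook q P (J + K - i) (l - i)"

definition qrook_corner :: "real \<Rightarrow> nat \<Rightarrow> nat \<Rightarrow> nat \<Rightarrow> nat \<Rightarrow> nat \<Rightarrow> real" where
  "qrook_corner q A P J K l = (\<Sum>i = 0..l. qrook_corner_term q A P J K l i)"

context
  fixes q :: real
  assumes q_pos: "0 < q" and q_ne_1: "q \<noteq> 1"
begin

lemma qint_eq_sum: "qint q n = (\<Sum>i<n. q ^ i)"
  using q_ne_1 by (simp add: qint_def sum_gp_strict)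

lemma qint_pos: "0 < n \<Longrightarrow> 0 < qint q n"
  unfolding qint_eq_sum using q_pos by (intro sum_pos) auto

lemma qint_add: "qint q (a + b) = qint q a + q ^ a * qint q b"
  using q_ne_1 unfolding qint_def by (simp add: field_simps power_add)

lemma qfact_pos: "0 < qfact q n"
  unfolding qfact_def by (intro prod_pos) (auto intro: qint_pos)

lemma qbinom_0 [simp]: "qbinom q n 0 = 1"
  using qfact_pos[of n] by (simp add: qbinom_def)

lemma qbinom_Suc_Suc: "qbinom q (Suc n) (Suc k) = q ^ Suc k * qbinom q n (Suc k) + qbinom q n k"
proof (cases "k < n")
  case True
  define m where "m = n - Suc k"
  have n: "n = k + Suc m" using True by (simp add: m_def)
  have "qint q (Suc n) = q ^ Suc k * qint q (Suc m) + qint q (Suc k)"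
    using qint_add[of "Suc k" "Suc m"] n by simp
  moreover have "0 < qfact q k" "0 < qfact q m" "0 < qint q (Suc k)" "0 < qint q (Suc m)"
    using qfact_pos qint_pos by auto
  ultimately show ?thesis
    unfolding qbinom_def n by (simp add: qfact_Suc field_simps)
next
  case False
  then show ?thesis using qfact_pos[of "Suc n"] qfact_pos[of n] by (cases "k = n") (auto simp: qbinom_def)
qed

lemma qbinom_absorption: "qint q N * qbinom q (N - 1) l = qint q (Suc l) * qbinom q N (Suc l)"
proof (cases "Suc l \<le> N")
  case True
  then obtain n where N: "N = Suc n" by (cases N) auto
  have "0 < qfact q l" "0 < qfact q (n - l)" "0 < qint q (Suc l)"
    using qfact_pos qint_pos by auto
  with True show ?thesis unfolding qbinom_def N by (simp add: qfact_Suc field_simps)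
next
  case False
  then have "N = 0 \<or> N - 1 < l" by auto
  with False show ?thesis by (auto simp: qbinom_def)
qed

lemma qrook_0 [simp]: "qrook q P N 0 = 1"
  by (simp add: qrook_def)

lemma qrook_Suc_Suc:
  "qrook q (Suc P) N (Suc l) = q ^ Suc l * qrook q P N (Suc l) + qint q N * qrook q P (N - 1) l"
proof -
  have "qrook q (Suc P) N (Suc l)
      = q ^ Suc l * qrook q P N (Suc l) + qfact q l * qbinom q P l * (qint q (Suc l) * qbinom q N (Suc l))"
    unfolding qrook_def qbinom_Suc_Suc qfact_Suc by (simp add: algebra_simps)
  then show ?thesis
    unfolding qbinom_absorption[symmetric] qrook_def by (simp add: algebra_simps)
qed

lemma qrook_corner_0 [simp]: "qrook_corner q A P J K 0 = 1"
  by (simp add: qrook_corner_def qrook_corner_term_def qfalling_def)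

lemma qrook_corner_0_left: "qrook_corner q 0 P J K l = qrook q P (J + K) l"
proof -
  have "qrook_corner q 0 P J K l
      = qrook_corner_term q 0 P J K l 0 + (\<Sum>i = Suc 0..l. qrook_corner_term q 0 P J K l i)"
    unfolding qrook_corner_def by (simp add: sum.atLeast_Suc_atMost)
  also have "(\<Sum>i = Suc 0..l. qrook_corner_term q 0 P J K l i) = 0"
    by (rule sum.neutral) (auto simp: qrook_corner_term_def qbinom_def)
  finally show ?thesis
    by (simp add: qrook_corner_term_def qfalling_def)
qed

lemma qrook_corner_term_Suc_0:
  "qrook_corner_term q (Suc A) P J K (Suc l) 0 = q ^ Suc l * qrook_corner_term q A P J K (Suc l) 0"
  by (simp add: qrook_corner_term_def power_add)

lemma qrook_corner_term_Suc_Suc: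
  assumes "i \<le> l"
  shows "qrook_corner_term q (Suc A) P J K (Suc l) (Suc i)
       = q ^ Suc l * qrook_corner_term q A P J K (Suc l) (Suc i)
         + q ^ J * qint q K * qrook_corner_term q A P J (K - 1) l i"
proof -
  define X where "X = q ^ ((A - i) * (l - i))"
  define R where "R = q ^ (J * Suc i) * qfalling q K (Suc i) * qrook q P (J + K - Suc i) (l - i)"
  have "qrook_corner_term q (Suc A) P J K (Suc l) (Suc i)
      = X * (q ^ Suc i * qbinom q A (Suc i) + qbinom q A i) * R"
    unfolding qrook_corner_term_def X_def R_def qbinom_Suc_Suc by (simp add: ac_simps)
  moreover have "q ^ Suc l * qrook_corner_term q A P J K (Suc l) (Suc i)
      = X * q ^ Suc i * qbinom q A (Suc i) * R"
  proof (cases "Suc i \<le> A")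
    case True
    obtain d e where "l = i + d" and "A = Suc i + e" using assms True le_Suc_ex le_iff_add by metis
    then have "Suc l + (A - Suc i) * (l - i) = (A - i) * (l - i) + Suc i" by simp
    then have "q ^ Suc l * q ^ ((A - Suc i) * (l - i)) = X * q ^ Suc i"
      unfolding X_def by (metis power_add)
    moreover have "q ^ Suc l * qrook_corner_term q A P J K (Suc l) (Suc i)
        = (q ^ Suc l * q ^ ((A - Suc i) * (l - i))) * qbinom q A (Suc i) * R"
      unfolding qrook_corner_term_def R_def by (simp add: ac_simps)
    ultimately show ?thesis by metis
  qed (simp add: qrook_corner_term_def qbinom_def)
  moreover have "q ^ J * qint q K * qrook_corner_term q A P J (K - 1) l i = X * qbinom q A i * R"
  proof -
    have "qint q K * qfalling q (K - 1) i * qrook q P (J + (K - 1) - i) (l - i)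
        = qfalling q K (Suc i) * qrook q P (J + K - Suc i) (l - i)"
      unfolding qfalling_Suc by (cases K) simp_all
    then show ?thesis
      unfolding qrook_corner_term_def X_def R_def by (simp add: ac_simps power_add)
  qed
  ultimately show ?thesis by (simp only: ring_distribs mult.assoc)
qed

lemma qrook_corner_Suc_Suc:
  "qrook_corner q (Suc A) P J K (Suc l)
     = q ^ Suc l * qrook_corner q A P J K (Suc l) + q ^ J * qint q K * qrook_corner q A P J (K - 1) l"
proof -
  let ?t = "qrook_corner_term q"
  have "qrook_corner q (Suc A) P J K (Suc l)
      = ?t (Suc A) P J K (Suc l) 0 + (\<Sum>i = 0..l. ?t (Suc A) P J K (Suc l) (Suc i))"
    unfolding qrook_corner_def sum.atLeast0_atMost_Suc_shift comp_def ..
  also have "\<dots> = q ^ Suc l * (?t A P J K (Suc l) 0 + (\<Sum>i = 0..l. ?t A P J K (Suc l) (Suc i)))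
      + q ^ J * qint q K * (\<Sum>i = 0..l. ?t A P J (K - 1) l i)"
    by (simp add: qrook_corner_term_Suc_0 qrook_corner_term_Suc_Suc sum.distrib sum_distrib_left
        distrib_left mult.assoc)
  also have "\<dots>
      = q ^ Suc l * qrook_corner q A P J K (Suc l) + q ^ J * qint q K * qrook_corner q A P J (K - 1) l"
    by (simp only: qrook_corner_def sum.atLeast0_atMost_Suc_shift comp_def)
  finally show ?thesis .
qed

end

definition edge_crossings :: "('a::linorder \<times> 'b::linorder) set \<Rightarrow> nat" where
  "edge_crossings E = card {(e1, e2). e1 \<in> E \<and> e2 \<in> E \<and> fst e1 < fst e2 \<and> snd e2 < snd e1}"

definition top_crossings :: "'a::linorder set \<Rightarrow> ('a \<times> 'b) set \<Rightarrow> nat" where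
  "top_crossings T E = card {(e, c). e \<in> E \<and> c \<in> T - fst ` E \<and> c < fst e}"

definition bottom_crossings :: "'b::linorder set \<Rightarrow> ('a \<times> 'b) set \<Rightarrow> nat" where
  "bottom_crossings B E = card {(e, d). e \<in> E \<and> d \<in> B - snd ` E \<and> d < snd e}"

definition crossings :: "'a::linorder set \<Rightarrow> 'b::linorder set \<Rightarrow> ('a \<times> 'b) set \<Rightarrow> nat" where
  "crossings T B E = edge_crossings E + top_crossings T E + bottom_crossings B E"

definition rank_in :: "'a::linorder set \<Rightarrow> 'a \<Rightarrow> nat" where
  "rank_in B b = card {d \<in> B. d < b}"

lemma edge_crossings_insert:
  assumes "finite E" and "\<forall>e\<in>E. x < fst e"
  shows "edge_crossings (insert (x, b) E) = edge_crossings E + card {e \<in> E. snd e < b}"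
proof -
  have split: "{(e1, e2). e1 \<in> insert (x, b) E \<and> e2 \<in> insert (x, b) E \<and> fst e1 < fst e2 \<and> snd e2 < snd e1}
      = {(e1, e2). e1 \<in> E \<and> e2 \<in> E \<and> fst e1 < fst e2 \<and> snd e2 < snd e1}
        \<union> Pair (x, b) ` {e \<in> E. snd e < b}"
    (is "_ = ?old \<union> _") using assms(2) by fastforce
  moreover have "finite ?old"
    by (rule finite_subset[of _ "E \<times> E"]) (use assms(1) in auto)
  ultimately show ?thesis
    unfolding edge_crossings_def split using assms
    by (subst card_Un_disjoint) (auto simp: card_image inj_on_def)
qed

lemma top_crossings_insert_isolated:
  assumes "finite T" and "finite E" and "x \<notin> T" and "\<forall>e\<in>E. x < fst e"
  shows "top_crossings (insert x T) E = top_crossings T E + card E"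
proof -
  have split: "{(e, c). e \<in> E \<and> c \<in> insert x T - fst ` E \<and> c < fst e}
      = {(e, c). e \<in> E \<and> c \<in> T - fst ` E \<and> c < fst e} \<union> (\<lambda>e. (e, x)) ` E"
    (is "_ = ?old \<union> _") using assms(4) by fastforce
  moreover have "finite ?old"
    by (rule finite_subset[of _ "E \<times> T"]) (use assms(1,2) in auto)
  ultimately show ?thesis
    unfolding top_crossings_def split using assms
    by (subst card_Un_disjoint) (auto simp: card_image inj_on_def)
qed

lemma top_crossings_insert_edge:
  assumes "\<forall>t\<in>T. x < t"
  shows "top_crossings (insert x T) (insert (x, b) E) = top_crossings T E"
proof -
  have "{(e, c). e \<in> insert (x, b) E \<and> c \<in> insert x T - fst ` insert (x, b) E \<and> c < fst e}
      = {(e, c). e \<in> E \<and> c \<in> T - fst ` E \<and> c < fst e}"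
    using assms by fastforce
  then show ?thesis unfolding top_crossings_def by simp
qed

lemma bottom_crossings_insert_edge:
  assumes "finite B" and "finite E" and "(x, b) \<notin> E"
  shows "bottom_crossings B (insert (x, b) E)
       = bottom_crossings (B - {b}) E + card {d \<in> B - {b} - snd ` E. d < b}"
proof -
  have split: "{(e, d). e \<in> insert (x, b) E \<and> d \<in> B - snd ` insert (x, b) E \<and> d < snd e}
      = {(e, d). e \<in> E \<and> d \<in> B - {b} - snd ` E \<and> d < snd e}
        \<union> Pair (x, b) ` {d \<in> B - {b} - snd ` E. d < b}"
    (is "_ = ?old \<union> _") by auto
  moreover have "finite ?old"
    by (rule finite_subset[of _ "E \<times> B"]) (use assms(1,2) in auto)
  ultimately show ?thesis
    unfolding bottom_crossings_def split using assms
    by (subst card_Un_disjoint) (auto simp: card_image inj_on_def)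
qed

lemma rank_in_split:
  assumes "finite B" and "snd ` E \<subseteq> B" and "inj_on snd E"
  shows "rank_in B b = card {e \<in> E. snd e < b} + card {d \<in> B - {b} - snd ` E. d < b}"
proof -
  have split: "{d \<in> B. d < b} = {d \<in> snd ` E. d < b} \<union> {d \<in> B - {b} - snd ` E. d < b}"
    using assms(2) by auto
  have "rank_in B b = card {d \<in> snd ` E. d < b} + card {d \<in> B - {b} - snd ` E. d < b}"
    unfolding rank_in_def split using assms(1,2)
    by (subst card_Un_disjoint) (auto intro: rev_finite_subset)
  also have "{d \<in> snd ` E. d < b} = snd ` {e \<in> E. snd e < b}" by auto
  also have "card \<dots> = card {e \<in> E. snd e < b}"
    using assms(3) by (simp add: card_image inj_on_subset)
  finally show ?thesis .
qed

lemma crossings_insert_isolated: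
  assumes "finite T" and "finite E" and "x \<notin> T" and "\<forall>e\<in>E. x < fst e"
  shows "crossings (insert x T) B E = crossings T B E + card E"
  using top_crossings_insert_isolated[OF assms] unfolding crossings_def by simp

lemma crossings_insert_edge:
  assumes "finite B" and "finite E" and "E \<subseteq> T \<times> (B - {b})" and "inj_on snd E"
    and "\<forall>t\<in>T. x < t"
  shows "crossings (insert x T) B (insert (x, b) E) = crossings T (B - {b}) E + rank_in B b"
proof -
  have "\<forall>e\<in>E. x < fst e" and "(x, b) \<notin> E" and "snd ` E \<subseteq> B" using assms(3,5) by auto
  then show ?thesis
    unfolding crossings_def
    by (simp add: edge_crossings_insert[OF assms(2)] top_crossings_insert_edge[OF assms(5)]
      bottom_crossings_insert_edge[OF assms(1,2)] rank_in_split[OF assms(1) _ assms(4), of b])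
qed

lemma sum_power_rank_in:
  fixes B :: "'a::linorder set"
  assumes "finite B" and "q \<noteq> 1"
  shows "(\<Sum>b\<in>B. q ^ rank_in B b) = qint q (card B)"
  using assms(1)
proof (induction B rule: finite_linorder_max_induct)
  case empty
  then show ?case by (simp add: qint_def)
next
  case (insert m B)
  have "m \<notin> B" and "{d \<in> insert m B. d < m} = B" using insert.hyps by auto
  then have top: "rank_in (insert m B) m = card B" unfolding rank_in_def by simp
  have "{d \<in> insert m B. d < b} = {d \<in> B. d < b}" if "b \<in> B" for b
    using insert.hyps that by auto
  then have "(\<Sum>b\<in>B. q ^ rank_in (insert m B) b) = qint q (card B)"
    using insert.IH unfolding rank_in_def by simp
  with top show ?case
    using insert.hyps \<open>m \<notin> B\<close> assms(2) by (simp add: qint_Suc)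
qed

lemma sum_power_rank_in_ge:
  fixes B :: "'a::linorder set"
  assumes "finite B" and "q \<noteq> 1"
  shows "(\<Sum>b\<in>{b \<in> B. c \<le> b}. q ^ rank_in B b)
       = q ^ card {b \<in> B. b < c} * qint q (card {b \<in> B. c \<le> b})"
proof -
  let ?B = "{b \<in> B. c \<le> b}"
  have "rank_in B b = card {d \<in> B. d < c} + rank_in ?B b" if "b \<in> ?B" for b
  proof -
    have split: "{d \<in> B. d < b} = {d \<in> B. d < c} \<union> {d \<in> ?B. d < b}"
      using that by auto
    show ?thesis
      unfolding rank_in_def split using assms(1) by (subst card_Un_disjoint) auto
  qed
  then have "(\<Sum>b\<in>?B. q ^ rank_in B b) = q ^ card {d \<in> B. d < c} * (\<Sum>b\<in>?B. q ^ rank_in ?B b)"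
    by (simp add: power_add sum_distrib_left)
  then show ?thesis
    using sum_power_rank_in[of ?B q] assms by simp
qed

lemma card_neg_add_card_nonneg:
  fixes S :: "int set"
  assumes "finite S"
  shows "card {s \<in> S. s < 0} + card {s \<in> S. 0 \<le> s} = card S"
proof -
  have "S = {s \<in> S. s < 0} \<union> {s \<in> S. 0 \<le> s}" by auto
  then show ?thesis
    using assms by (metis (no_types, lifting) card_Un_disjoint disjoint_iff finite_Un mem_Collect_eq not_le)
qed

definition matchings_on :: "int set \<Rightarrow> int set \<Rightarrow> nat \<Rightarrow> (int \<times> int) set set" where
  "matchings_on T B l = {E. E \<subseteq> T \<times> B \<and> (\<forall>(a, b)\<in>E. \<not> (a < 0 \<and> b < 0))
      \<and> inj_on fst E \<and> inj_on snd E \<and> card E = l}"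

definition crossing_weight :: "real \<Rightarrow> int set \<Rightarrow> int set \<Rightarrow> nat \<Rightarrow> real" where
  "crossing_weight q T B l = (\<Sum>E\<in>matchings_on T B l. q ^ crossings T B E)"

lemma finite_matchings_on:
  assumes "finite T" and "finite B"
  shows "finite (matchings_on T B l)"
proof (rule finite_subset)
  show "matchings_on T B l \<subseteq> Pow (T \<times> B)" unfolding matchings_on_def by auto
qed (use assms in simp)

lemma finite_matching:
  assumes "finite T" and "finite B" and "E \<in> matchings_on T B l"
  shows "finite E"
proof -
  have "E \<subseteq> T \<times> B" using assms(3) unfolding matchings_on_def by blast
  then show ?thesis using assms(1,2) by (simp add: finite_subset)
qed

lemma crossing_weight_0:
  assumes "finite T" and "finite B"
  shows "crossing_weight q T B 0 = 1"
proof -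
  have "matchings_on T B 0 = {{}}"
  proof (intro equalityI subsetI)
    fix E assume E: "E \<in> matchings_on T B 0"
    then have "card E = 0" unfolding matchings_on_def by blast
    with finite_matching[OF assms E] show "E \<in> {{}}" by simp
  qed (simp add: matchings_on_def)
  then show ?thesis unfolding crossing_weight_def crossings_def
    by (simp add: edge_crossings_def top_crossings_def bottom_crossings_def)
qed

lemma crossing_weight_empty_Suc: "crossing_weight q {} B (Suc l) = 0"
proof -
  have "matchings_on {} B (Suc l) = {}" unfolding matchings_on_def by auto
  then show ?thesis unfolding crossing_weight_def by simp
qed

lemma matchings_on_insert_isolated:
  assumes "x \<notin> T"
  shows "{E \<in> matchings_on (insert x T) B l. x \<notin> fst ` E} = matchings_on T B l"
proof -
  have "E \<subseteq> insert x T \<times> B \<and> x \<notin> fst ` E \<longleftrightarrow> E \<subseteq> T \<times> B" for E :: "(int \<times> int) set"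
    using assms by force
  then show ?thesis unfolding matchings_on_def by auto
qed

lemma matchings_on_remove_edge:
  assumes "finite T" and "finite B" and E: "E \<in> matchings_on (insert x T) B (Suc l)"
    and "(x, b) \<in> E" and "x \<notin> T"
  shows "E - {(x, b)} \<in> matchings_on T (B - {b}) l"
proof -
  have sub: "E \<subseteq> insert x T \<times> B" and inj: "inj_on fst E" "inj_on snd E"
    using E unfolding matchings_on_def by auto
  have "fst e \<noteq> x" "snd e \<noteq> b" if "e \<in> E - {(x, b)}" for e
    using that inj assms(4) by (metis DiffE fst_conv snd_conv insertCI inj_on_eq_iff)+
  then have "E - {(x, b)} \<subseteq> T \<times> (B - {b})" using sub by fastforce
  moreover have "card (E - {(x, b)}) = l"
    using E assms(4) finite_matching[OF _ assms(2) E] assms(1) unfolding matchings_on_def by simp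
  ultimately show ?thesis
    using E inj_on_diff unfolding matchings_on_def by blast
qed

lemma matchings_on_insert_matched:
  assumes "finite T" and "finite B" and "x \<notin> T"
  shows "{E \<in> matchings_on (insert x T) B (Suc l). x \<in> fst ` E}
       = (\<lambda>(b, E). insert (x, b) E) ` (SIGMA b:{b \<in> B. \<not> (x < 0 \<and> b < 0)}. matchings_on T (B - {b}) l)"
  (is "?L = ?R")
proof (intro equalityI subsetI)
  fix E assume "E \<in> ?L"
  then obtain b where E: "E \<in> matchings_on (insert x T) B (Suc l)" and xb: "(x, b) \<in> E"
    by force
  have "b \<in> B" "\<not> (x < 0 \<and> b < 0)" using E xb unfolding matchings_on_def by auto
  moreover note matchings_on_remove_edge[OF assms(1,2) E xb assms(3)]
  moreover have "E = insert (x, b) (E - {(x, b)})" using xb by auto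
  ultimately show "E \<in> ?R" by blast
next
  fix E assume "E \<in> ?R"
  then obtain b E' where E: "E = insert (x, b) E'" and b: "b \<in> B" "\<not> (x < 0 \<and> b < 0)"
    and E': "E' \<in> matchings_on T (B - {b}) l" by auto
  have "finite E'" using finite_matching[OF _ _ E'] assms by auto
  moreover have "E' \<subseteq> T \<times> (B - {b})" "inj_on fst E'" "inj_on snd E'" "card E' = l"
    "\<forall>(a, b)\<in>E'. \<not> (a < 0 \<and> b < 0)"
    using E' unfolding matchings_on_def by auto
  moreover have "(x, b) \<notin> E'" using calculation(2) assms(3) by auto
  ultimately show "E \<in> ?L"
    unfolding E matchings_on_def using assms(3) b by (auto simp: inj_on_def)
qed

lemma inj_on_insert_edge: "inj_on (\<lambda>(b, E). insert (x, b) E) {(b, E). x \<notin> fst ` E}"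
proof (rule inj_onI, clarify)
  fix b E b' E'
  assume "x \<notin> fst ` E" "x \<notin> fst ` E'" and eq: "insert (x, b) E = insert (x, b') E'"
  then have "b = b'" by (metis fst_conv image_eqI insert_iff prod.inject)
  with eq show "b = b' \<and> E = E'"
    using \<open>x \<notin> fst ` E\<close> \<open>x \<notin> fst ` E'\<close> by (metis Diff_insert_absorb fst_conv image_eqI)
qed

lemma sum_crossings_isolated:
  assumes "finite T" and "finite B" and "x \<notin> T" and "\<forall>t\<in>T. x < t"
  shows "(\<Sum>E\<in>{E \<in> matchings_on (insert x T) B l. x \<notin> fst ` E}. q ^ crossings (insert x T) B E)
       = q ^ l * crossing_weight q T B l"
proof -
  have "q ^ crossings (insert x T) B E = q ^ l * q ^ crossings T B E" if "E \<in> matchings_on T B l" for E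
  proof -
    have "\<forall>e\<in>E. x < fst e" "card E = l"
      using that assms(4) unfolding matchings_on_def by auto
    then show ?thesis
      using crossings_insert_isolated[OF assms(1) finite_matching[OF assms(1,2) that] assms(3)]
      by (simp add: power_add)
  qed
  then show ?thesis
    unfolding matchings_on_insert_isolated[OF assms(3)] crossing_weight_def sum_distrib_left
    by (rule sum.cong[OF refl])
qed

lemma sum_crossings_matched:
  assumes "finite T" and "finite B" and "x \<notin> T" and "\<forall>t\<in>T. x < t"
  shows "(\<Sum>E\<in>{E \<in> matchings_on (insert x T) B (Suc l). x \<in> fst ` E}. q ^ crossings (insert x T) B E)
       = (\<Sum>b\<in>{b \<in> B. \<not> (x < 0 \<and> b < 0)}. q ^ rank_in B b * crossing_weight q T (B - {b}) l)"
proof -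
  let ?Sigma = "SIGMA b:{b \<in> B. \<not> (x < 0 \<and> b < 0)}. matchings_on T (B - {b}) l"
  have "inj_on (\<lambda>(b, E). insert (x, b) E) ?Sigma"
    by (rule inj_on_subset[OF inj_on_insert_edge]) (use assms(3) in \<open>auto simp: matchings_on_def\<close>)
  then have "(\<Sum>E\<in>{E \<in> matchings_on (insert x T) B (Suc l). x \<in> fst ` E}. q ^ crossings (insert x T) B E)
      = (\<Sum>(b, E)\<in>?Sigma. q ^ crossings (insert x T) B (insert (x, b) E))"
    unfolding matchings_on_insert_matched[OF assms(1-3)] by (simp add: sum.reindex case_prod_unfold)
  also have "\<dots> = (\<Sum>(b, E)\<in>?Sigma. q ^ rank_in B b * q ^ crossings T (B - {b}) E)"
  proof (rule sum.cong[OF refl], clarify)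
    fix b E assume E: "E \<in> matchings_on T (B - {b}) l"
    then have "finite E" using assms(1,2) finite_matching by blast
    moreover have "E \<subseteq> T \<times> (B - {b})" "inj_on snd E" using E unfolding matchings_on_def by auto
    ultimately show "q ^ crossings (insert x T) B (insert (x, b) E)
        = q ^ rank_in B b * q ^ crossings T (B - {b}) E"
      using crossings_insert_edge[OF assms(2) _ _ _ assms(4)] by (simp add: power_add)
  qed
  also have "\<dots> = (\<Sum>b\<in>{b \<in> B. \<not> (x < 0 \<and> b < 0)}. q ^ rank_in B b * crossing_weight q T (B - {b}) l)"
    unfolding crossing_weight_def sum_distrib_left
    by (rule sum.Sigma[symmetric]) (use assms finite_matchings_on in auto)
  finally show ?thesis .
qed

lemma crossing_weight_insert_Suc:
  assumes "finite T" and "finite B" and "x \<notin> T" and "\<forall>t\<in>T. x < t"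
  shows "crossing_weight q (insert x T) B (Suc l)
       = q ^ Suc l * crossing_weight q T B (Suc l)
         + (\<Sum>b\<in>{b \<in> B. \<not> (x < 0 \<and> b < 0)}. q ^ rank_in B b * crossing_weight q T (B - {b}) l)"
proof -
  let ?M = "matchings_on (insert x T) B (Suc l)"
  have "finite ?M" using assms(1,2) by (simp add: finite_matchings_on)
  have "crossing_weight q (insert x T) B (Suc l)
      = (\<Sum>E\<in>{E \<in> ?M. x \<notin> fst ` E} \<union> {E \<in> ?M. x \<in> fst ` E}. q ^ crossings (insert x T) B E)"
    unfolding crossing_weight_def by (rule sum.cong) auto
  also have "\<dots> = (\<Sum>E\<in>{E \<in> ?M. x \<notin> fst ` E}. q ^ crossings (insert x T) B E)
      + (\<Sum>E\<in>{E \<in> ?M. x \<in> fst ` E}. q ^ crossings (insert x T) B E)"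
    by (rule sum.union_disjoint) (use \<open>finite ?M\<close> in auto)
  finally show ?thesis
    unfolding sum_crossings_isolated[OF assms] sum_crossings_matched[OF assms] .
qed

lemma crossing_weight_insert_neg_Suc:
  fixes T B :: "int set"
  assumes q: "0 < q" "q \<noteq> 1" and "finite T" and "finite B" and "x < 0" and "\<forall>t\<in>T. x < t"
    and IH: "\<And>B' l'. finite B' \<Longrightarrow> crossing_weight q T B' l'
      = qrook_corner q A P (card {b \<in> B'. b < 0}) (card {b \<in> B'. 0 \<le> b}) l'"
  shows "crossing_weight q (insert x T) B (Suc l)
       = qrook_corner q (Suc A) P (card {b \<in> B. b < 0}) (card {b \<in> B. 0 \<le> b}) (Suc l)"
proof -
  let ?J = "card {b \<in> B. b < 0}" and ?K = "card {b \<in> B. 0 \<le> b}"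
  have "x \<notin> T" using assms(6) by auto
  have "{b \<in> B. \<not> (x < 0 \<and> b < 0)} = {b \<in> B. 0 \<le> b}" using assms(5) by auto
  moreover have "crossing_weight q T (B - {b}) l = qrook_corner q A P ?J (?K - 1) l"
    if "b \<in> B" and "0 \<le> b" for b
  proof -
    have "{d \<in> B - {b}. d < 0} = {d \<in> B. d < 0}" and "{d \<in> B - {b}. 0 \<le> d} = {d \<in> B. 0 \<le> d} - {b}"
      using that by auto
    then show ?thesis using IH[of "B - {b}"] assms(4) that by simp
  qed
  ultimately have "(\<Sum>b\<in>{b \<in> B. \<not> (x < 0 \<and> b < 0)}. q ^ rank_in B b * crossing_weight q T (B - {b}) l)
      = q ^ ?J * qint q ?K * qrook_corner q A P ?J (?K - 1) l"
    using sum_power_rank_in_ge[OF assms(4) q(2), of 0] by (simp add: sum_distrib_right[symmetric])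
  then show ?thesis
    using crossing_weight_insert_Suc[OF assms(3,4) \<open>x \<notin> T\<close> assms(6)] IH[OF assms(4)]
    by (simp add: qrook_corner_Suc_Suc[OF q])
qed

lemma crossing_weight_insert_nonneg_Suc:
  fixes T B :: "int set"
  assumes q: "0 < q" "q \<noteq> 1" and "finite T" and "finite B" and "0 \<le> x" and "\<forall>t\<in>T. x < t"
    and IH: "\<And>B' l'. finite B' \<Longrightarrow> crossing_weight q T B' l' = qrook q P (card B') l'"
  shows "crossing_weight q (insert x T) B (Suc l) = qrook q (Suc P) (card B) (Suc l)"
proof -
  have "x \<notin> T" using assms(6) by auto
  have "{b \<in> B. \<not> (x < 0 \<and> b < 0)} = B" using assms(5) by auto
  moreover have "crossing_weight q T (B - {b}) l = qrook q P (card B - 1) l" if "b \<in> B" for b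
    using IH[of "B - {b}"] assms(4) that by simp
  ultimately have "(\<Sum>b\<in>{b \<in> B. \<not> (x < 0 \<and> b < 0)}. q ^ rank_in B b * crossing_weight q T (B - {b}) l)
      = qint q (card B) * qrook q P (card B - 1) l"
    using sum_power_rank_in[OF assms(4) q(2)] by (simp add: sum_distrib_right[symmetric])
  then show ?thesis
    using crossing_weight_insert_Suc[OF assms(3,4) \<open>x \<notin> T\<close> assms(6)] IH[OF assms(4)]
    by (simp add: qrook_Suc_Suc[OF q])
qed

lemma crossing_weight_eq_qrook_corner:
  fixes T B :: "int set"
  assumes q: "0 < q" "q \<noteq> 1" and "finite T" and "finite B"
  shows "crossing_weight q T B l = qrook_corner q (card {t \<in> T. t < 0}) (card {t \<in> T. 0 \<le> t})
           (card {b \<in> B. b < 0}) (card {b \<in> B. 0 \<le> b}) l"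
  using assms(3,4)
proof (induction T arbitrary: B l rule: finite_linorder_min_induct)
  case empty
  then show ?case
    by (cases l) (simp_all add: q crossing_weight_0 crossing_weight_empty_Suc qrook_corner_0_left qrook_0_Suc)
next
  case (insert x T)
  show ?case
  proof (cases l)
    case 0
    then show ?thesis using insert by (simp add: q crossing_weight_0)
  next
    case (Suc l)
    show ?thesis
    proof (cases "x < 0")
      case True
      then have "{t \<in> insert x T. t < 0} = insert x {t \<in> T. t < 0}"
        and "{t \<in> insert x T. 0 \<le> t} = {t \<in> T. 0 \<le> t}" and "x \<notin> T"
        using insert.hyps(2) by auto
      then show ?thesis
        using crossing_weight_insert_neg_Suc[OF q insert.hyps(1) insert.prems True insert.hyps(2) insert.IH]
          insert.hyps(1) Suc by simp
    next
      case False
      then have "{t \<in> T. t < 0} = {}" and "{t \<in> insert x T. t < 0} = {}"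
        and "{t \<in> insert x T. 0 \<le> t} = insert x {t \<in> T. 0 \<le> t}" and "x \<notin> T"
        using insert.hyps(2) by auto
      then have counts: "card {t \<in> insert x T. t < 0} = 0"
        "card {t \<in> insert x T. 0 \<le> t} = Suc (card {t \<in> T. 0 \<le> t})"
        using insert.hyps(1) by simp_all
      have "crossing_weight q T B' l' = qrook q (card {t \<in> T. 0 \<le> t}) (card B') l'"
        if "finite B'" for B' l'
        using insert.IH[OF that] \<open>{t \<in> T. t < 0} = {}\<close> card_neg_add_card_nonneg[OF that]
        by (simp add: qrook_corner_0_left[OF q])
      then have "crossing_weight q (insert x T) B (Suc l)
          = qrook q (Suc (card {t \<in> T. 0 \<le> t})) (card B) (Suc l)"
        using crossing_weight_insert_nonneg_Suc[OF q insert.hyps(1) insert.prems _ insert.hyps(2)] False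
        by simp
      then show ?thesis
        unfolding counts Suc using card_neg_add_card_nonneg[OF insert.prems]
        by (simp add: qrook_corner_0_left[OF q])
    qed
  qed
qed

lemma qrook_corner_perfect:
  "qrook_corner q (\<alpha> + j) p j p p = qfact q p * (\<Sum>i = 0..p.
            q powi ((int p - int i) * (int \<alpha> - int i) + int p * int j)
            * qbinom q p i * qbinom q (\<alpha> + j) i * qbinom q (p - i + j) j)"
  unfolding qrook_corner_def sum_distrib_left
proof (rule sum.cong[OF refl])
  fix i assume "i \<in> {0..p}"
  then have "i \<le> p" by simp
  show "qrook_corner_term q (\<alpha> + j) p j p p i
      = qfact q p * (q powi ((int p - int i) * (int \<alpha> - int i) + int p * int j)
            * qbinom q p i * qbinom q (\<alpha> + j) i * qbinom q (p - i + j) j)"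
  proof (cases "i \<le> \<alpha> + j")
    case True
    have "int ((\<alpha> + j - i) * (p - i) + j * i)
        = (int \<alpha> + int j - int i) * (int p - int i) + int j * int i"
      by (simp only: of_nat_add of_nat_mult of_nat_diff[OF True] of_nat_diff[OF \<open>i \<le> p\<close>])
    then have "(int p - int i) * (int \<alpha> - int i) + int p * int j
        = int ((\<alpha> + j - i) * (p - i) + j * i)"
      by (simp add: algebra_simps)
    then have "q powi ((int p - int i) * (int \<alpha> - int i) + int p * int j)
        = q ^ ((\<alpha> + j - i) * (p - i)) * q ^ (j * i)"
      by (simp only: power_int_of_nat power_add)
    moreover have "qbinom q (j + p - i) (p - i) = qbinom q (p - i + j) j"
      using qbinom_symmetric[of j "p - i + j" q] \<open>i \<le> p\<close> by (simp add: add.commute)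
    ultimately show ?thesis
      unfolding qrook_corner_term_def qrook_def qbinom_symmetric[OF \<open>i \<le> p\<close>]
        qfalling_mult_qfact[OF \<open>i \<le> p\<close>, symmetric]
      by (simp add: algebra_simps)
  qed (simp add: qrook_corner_term_def qbinom_def)
qed

theorem lemma2p6:
  fixes q :: real and \<alpha> p j :: nat
  assumes "0 < q" and "q < 1"
  shows "(\<Sum>M\<in>matchings_l \<alpha> p j p. q ^ cr \<alpha> p j M)
       = qfact q p * (\<Sum>i = 0..p.
            q powi ((int p - int i) * (int \<alpha> - int i) + int p * int j)
            * qbinom q p i * qbinom q (\<alpha> + j) i * qbinom q (p - i + j) j)"
proof -
  let ?T = "top_vs \<alpha> p j" and ?B = "bot_vs p j"
  have q: "0 < q" "q \<noteq> 1" using assms by auto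
  have "matchings_l \<alpha> p j p = matchings_on ?T ?B p"
    unfolding matchings_l_def matchings_def matchings_on_def inj_on_def by auto
  moreover have "cr \<alpha> p j = crossings ?T ?B"
    unfolding cr_def crossings_def edge_crossings_def top_crossings_def bottom_crossings_def ..
  moreover have "{t \<in> ?T. t < 0} = {-(int \<alpha> + int j)..-1}" and "{t \<in> ?T. 0 \<le> t} = {1..int p}"
    and "{b \<in> ?B. b < 0} = {-(int j)..-1}" and "{b \<in> ?B. 0 \<le> b} = {1..int p}"
    unfolding top_vs_def bot_vs_def by auto
  ultimately have "(\<Sum>M\<in>matchings_l \<alpha> p j p. q ^ cr \<alpha> p j M) = qrook_corner q (\<alpha> + j) p j p p"
    using crossing_weight_eq_qrook_corner[OF q, of ?T ?B p]
    unfolding crossing_weight_def top_vs_def bot_vs_def by (simp add: nat_int_add)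
  then show ?thesis using qrook_corner_perfect by simp
qed

end
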